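(* Let $(X,\|\cdot\|)$ be a real Banach space, $T\in(0,\infty]$, $a<0<b$. Let $f:\Omega(T,b)\to X$ satisfy hypothesis (LC) and let $g:\tilde\Omega(T,a,b)\to\mathbb R$ satisfy hypothesis (MJ) with respect to $f$. Fix $x\in X$ with $\|x\|<b$. Let $\varphi:(\alpha,\beta)\to X$ be the maximal solution of $y'=f(t,y)$, $y(0)=x$, and $\psi:(\tilde\alpha,\tilde\beta)\to\mathbb R$ the maximal solution of $z'=g(t,z)$, $z(0)=\|x\|$. Then $\tilde\beta\le\beta$ and $\|\varphi(t)\|\le\psi(t)$ for every $t\in[0,\tilde\beta)$.
   Context: $\tilde\Omega(T,a,b):=(-T,T)\times(a,b)\subset\mathbb R^2$ and $\Omega(T,b):=(-T,T)\times D(0,b)\subset\mathbb R\times X$, where $D(0,b)=\{y\in X:\|y\|<b\}$. Hypothesis (LC) for $f:\Omega(T,b)\to X$: $f$ is continuous and for every compact $K\subset\Omega(T,b)$ there is $C=C(K)>0$ with $\|f(t,y)-f(t,y')\|\le C\|y-y'\|$ for all $(t,y),(t,y')\in K$. Hypothesis (MJ) for $g:\tilde\Omega(T,a,b)\to\mathbb R$ with respect to $f$: (i) $g$ is continuous and locally Lipschitz continuous with respect to $z$; (ii) for every fixed $t\in[0,T)$ the map $[0,b)\ni z\mapsto g(t,z)$ is non-decreasing; (iii) $\|f(t,y)\|\le g(|t|,\|y\|)$ for all $(t,y)\in\Omega(T,b)$. Maximal solutions are solutions defined on the largest open interval containing $0$. *)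

theory Defs
  imports "HOL-Analysis.Analysis"
begin

definition time_int :: "ereal \<Rightarrow> real set" where
  "time_int T = {t. - T < ereal t \<and> ereal t < T}"

definition eint :: "ereal \<Rightarrow> ereal \<Rightarrow> real set" where
  "eint \<alpha> \<beta> = {t. \<alpha> < ereal t \<and> ereal t < \<beta>}"

definition Omega :: "ereal \<Rightarrow> real \<Rightarrow> (real \<times> 'a::real_normed_vector) set" where
  "Omega T b = time_int T \<times> {y. norm y < b}"

definition Omega_tilde :: "ereal \<Rightarrow> real \<Rightarrow> real \<Rightarrow> (real \<times> real) set" where
  "Omega_tilde T a b = time_int T \<times> {a<..<b}"

definition is_solution ::
  "(real \<Rightarrow> 'a::real_normed_vector \<Rightarrow> 'a) \<Rightarrow> (real \<times> 'a) set \<Rightarrow> 'a \<Rightarrow>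
   (real \<Rightarrow> 'a) \<Rightarrow> ereal \<Rightarrow> ereal \<Rightarrow> bool" where
  "is_solution F D y0 y \<alpha> \<beta> \<longleftrightarrow>
     \<alpha> < 0 \<and> 0 < \<beta> \<and> y 0 = y0 \<and>
     (\<forall>t \<in> eint \<alpha> \<beta>. (t, y t) \<in> D \<and> (y has_vector_derivative F t (y t)) (at t))"

definition is_max_solution ::
  "(real \<Rightarrow> 'a::real_normed_vector \<Rightarrow> 'a) \<Rightarrow> (real \<times> 'a) set \<Rightarrow> 'a \<Rightarrow>
   (real \<Rightarrow> 'a) \<Rightarrow> ereal \<Rightarrow> ereal \<Rightarrow> bool" where
  "is_max_solution F D y0 y \<alpha> \<beta> \<longleftrightarrow>
     is_solution F D y0 y \<alpha> \<beta> \<and>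
     (\<forall>z \<alpha>' \<beta>'. is_solution F D y0 z \<alpha>' \<beta>' \<longrightarrow> \<alpha> \<le> \<alpha>' \<and> \<beta>' \<le> \<beta>)"

definition hyp_LC :: "ereal \<Rightarrow> real \<Rightarrow> (real \<Rightarrow> 'a::real_normed_vector \<Rightarrow> 'a) \<Rightarrow> bool" where
  "hyp_LC T b f \<longleftrightarrow>
     continuous_on (Omega T b) (\<lambda>(t,y). f t y) \<and>
     (\<forall>K. compact K \<and> K \<subseteq> Omega T b \<longrightarrow>
        (\<exists>C>0. \<forall>t y y'. (t,y) \<in> K \<and> (t,y') \<in> K \<longrightarrow> norm (f t y - f t y') \<le> C * norm (y - y')))"

definition hyp_MJ :: "ereal \<Rightarrow> real \<Rightarrow> real \<Rightarrow> (real \<Rightarrow> real \<Rightarrow> real) \<Rightarrow>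
    (real \<Rightarrow> 'a::real_normed_vector \<Rightarrow> 'a) \<Rightarrow> bool" where
  "hyp_MJ T a b g f \<longleftrightarrow>
     continuous_on (Omega_tilde T a b) (\<lambda>(t,z). g t z) \<and>
     local_lipschitz (time_int T) {a<..<b} g \<and>
     (\<forall>t. 0 \<le> t \<and> ereal t < T \<longrightarrow> mono_on {0..<b} (g t)) \<and>
     (\<forall>(t,y) \<in> Omega T b. norm (f t y) \<le> g \<bar>t\<bar> (norm y))"

end

theory Submission
  imports Defs
begin

text \<open>Where \<open>\<parallel>\<phi>\<parallel>\<close> exceeds \<open>\<psi>\<close>, hypothesis (MJ) and the Lipschitz continuity of \<open>g\<close> bound the growth
  of \<open>\<parallel>\<phi>\<parallel> - \<psi>\<close> over a short interval by a small multiple of its maximum there, so this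
  difference, which starts at \<open>0\<close>, never becomes positive. Hence \<open>\<phi>\<close> stays in the ball of radius
  \<open>max \<psi> < b\<close> with bounded velocity as long as both solutions exist. If \<open>\<beta>\<close> were smaller than the
  right end of \<open>\<psi>\<close>, then \<open>\<phi>\<close> would converge at \<open>\<beta>\<close> to a point of \<open>\<Omega>(T, b)\<close>, and local existence
  (Picard's contraction argument, which needs no compactness in the Banach space) would extend
  \<open>\<phi>\<close> beyond \<open>\<beta>\<close>, contradicting maximality.\<close>

section \<open>Local bounds from hypothesis (LC)\<close>

lemma open_time_int: "open (time_int T)"
proof -
  have "time_int T = ereal -` {- T<..<T}"
    by (auto simp: time_int_def)
  then show ?thesis
    by (simp add: open_ereal_vimage)
qed

lemma open_Omega: "open (Omega T b)"
  unfolding Omega_def by (intro open_Times open_time_int open_Collect_less continuous_intros)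

lemma open_contains_box:
  fixes U :: "(real \<times> 'a::real_normed_vector) set"
  assumes "open U" "(t0, y0) \<in> U"
  obtains d where "0 < d" "\<And>t y. \<bar>t - t0\<bar> \<le> d \<Longrightarrow> norm (y - y0) \<le> d \<Longrightarrow> (t, y) \<in> U"
proof -
  obtain e where e: "0 < e" "ball (t0, y0) e \<subseteq> U"
    using assms open_contains_ball by blast
  show ?thesis
  proof (rule that)
    show "0 < e / 3" using e by simp
    fix t y assume "\<bar>t - t0\<bar> \<le> e / 3" "norm (y - y0) \<le> e / 3"
    moreover have "dist (t0, y0) (t, y) \<le> \<bar>t - t0\<bar> + norm (y - y0)"
      using norm_Pair_le[of "t0 - t" "y0 - y"] by (simp add: dist_norm norm_minus_commute)
    ultimately show "(t, y) \<in> U"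
      using e by auto
  qed
qed

lemma compact_insert_limit_range:
  fixes P :: "nat \<Rightarrow> 'a::metric_space"
  assumes "P \<longlonglongrightarrow> z"
  shows "compact (insert z (range P))"
proof (rule compactI)
  fix C assume open_C: "\<forall>t\<in>C. open t" and cover: "insert z (range P) \<subseteq> \<Union>C"
  then obtain U where U: "U \<in> C" "z \<in> U"
    by auto
  then have "eventually (\<lambda>n. P n \<in> U) sequentially"
    using assms open_C by (auto intro: topological_tendstoD)
  then obtain N where N: "\<And>n. n \<ge> N \<Longrightarrow> P n \<in> U"
    by (auto simp: eventually_sequentially)
  have "\<forall>n. \<exists>V. V \<in> C \<and> P n \<in> V"
    using cover by auto
  then obtain V where V: "\<And>n. V n \<in> C" "\<And>n. P n \<in> V n"
    by metis
  have "insert z (range P) \<subseteq> \<Union>(insert U (V ` {..<N}))"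
    using U N V(2) by (auto simp: not_le) (metis lessThan_iff not_le)
  then show "\<exists>C'\<subseteq>C. finite C' \<and> insert z (range P) \<subseteq> \<Union>C'"
    using U V(1) by (intro exI[of _ "insert U (V ` {..<N})"]) auto
qed

lemma LIMSEQ_if_norm_le_const_over_Suc:
  fixes w :: "nat \<Rightarrow> 'a::real_normed_vector"
  assumes "\<And>n. norm (w n - l) \<le> c / real (Suc n)"
  shows "w \<longlonglongrightarrow> l"
proof -
  have "(\<lambda>n. c * inverse (real (Suc n))) \<longlonglongrightarrow> c * 0"
    by (intro tendsto_intros LIMSEQ_inverse_real_of_nat)
  then have "(\<lambda>n. c / real (Suc n)) \<longlonglongrightarrow> 0"
    by (simp add: divide_inverse)
  with always_eventually[OF allI[OF assms]] have "(\<lambda>n. w n - l) \<longlonglongrightarrow> 0"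
    by (rule Lim_null_comparison)
  then show ?thesis
    by (simp add: LIM_zero_cancel)
qed

text \<open>In infinite dimensions a box around a point is not compact, so the Lipschitz constant on a
  neighbourhood is obtained by contradiction: violating pairs converging to the centre, together
  with the centre, form a compact set.\<close>
lemma lipschitz_near_point_if_lipschitz_on_compacts:
  fixes F :: "real \<Rightarrow> 'a::real_normed_vector \<Rightarrow> 'b::real_normed_vector"
  assumes U: "open U" "(t0, y0) \<in> U"
    and lip: "\<And>K. compact K \<Longrightarrow> K \<subseteq> U \<Longrightarrow>
      \<exists>C. \<forall>t y y'. (t, y) \<in> K \<and> (t, y') \<in> K \<longrightarrow> norm (F t y - F t y') \<le> C * norm (y - y')"
  obtains d L where "0 < d"
    "\<And>t y y'. \<bar>t - t0\<bar> \<le> d \<Longrightarrow> norm (y - y0) \<le> d \<Longrightarrow> norm (y' - y0) \<le> d \<Longrightarrow>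
      norm (F t y - F t y') \<le> L * norm (y - y')"
proof -
  obtain d0 where d0: "0 < d0" "\<And>t y. \<bar>t - t0\<bar> \<le> d0 \<Longrightarrow> norm (y - y0) \<le> d0 \<Longrightarrow> (t, y) \<in> U"
    using open_contains_box[OF U] by blast
  define dn where "dn n = d0 / real (Suc n)" for n
  have "\<exists>n. \<forall>t y y'. \<bar>t - t0\<bar> \<le> dn n \<longrightarrow> norm (y - y0) \<le> dn n \<longrightarrow> norm (y' - y0) \<le> dn n \<longrightarrow>
      norm (F t y - F t y') \<le> real n * norm (y - y')"
  proof (rule ccontr)
    assume "\<not> ?thesis"
    then obtain tn yn yn' where bad:
      "\<And>n. \<bar>tn n - t0\<bar> \<le> dn n" "\<And>n. norm (yn n - y0) \<le> dn n" "\<And>n. norm (yn' n - y0) \<le> dn n"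
      "\<And>n. real n * norm (yn n - yn' n) < norm (F (tn n) (yn n) - F (tn n) (yn' n))"
      by (simp add: not_le) metis
    define K where "K = insert (t0, y0) (range (\<lambda>n. (tn n, yn n))) \<union> insert (t0, y0) (range (\<lambda>n. (tn n, yn' n)))"
    have "compact K"
      unfolding K_def using bad(1-3)
      by (intro compact_Un compact_insert_limit_range tendsto_Pair LIMSEQ_if_norm_le_const_over_Suc)
        (simp_all add: dn_def)
    moreover have "K \<subseteq> U"
    proof -
      have "dn n \<le> d0" for n
        using d0(1) by (simp add: dn_def divide_le_eq)
      then have "\<bar>tn n - t0\<bar> \<le> d0" "norm (yn n - y0) \<le> d0" "norm (yn' n - y0) \<le> d0" for n
        using bad(1-3)[of n] by (meson order_trans)+
      then show ?thesis
        unfolding K_def using U(2) d0(2) by auto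
    qed
    ultimately have "\<exists>C. \<forall>t y y'. (t, y) \<in> K \<and> (t, y') \<in> K \<longrightarrow> norm (F t y - F t y') \<le> C * norm (y - y')"
      by (rule lip)
    then obtain C where C: "\<And>t y y'. (t, y) \<in> K \<Longrightarrow> (t, y') \<in> K \<Longrightarrow> norm (F t y - F t y') \<le> C * norm (y - y')"
      by blast
    obtain n :: nat where n: "C < real n"
      using reals_Archimedean2 by blast
    have "(tn n, yn n) \<in> K" "(tn n, yn' n) \<in> K"
      by (auto simp: K_def)
    then have "norm (F (tn n) (yn n) - F (tn n) (yn' n)) \<le> C * norm (yn n - yn' n)"
      by (rule C)
    also have "\<dots> \<le> real n * norm (yn n - yn' n)"
      using n by (intro mult_right_mono) auto
    finally show False
      using bad(4)[of n] by simp
  qed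
  moreover have "0 < dn n" for n
    using d0(1) by (simp add: dn_def)
  ultimately show ?thesis
    using that by blast
qed

lemma bounded_near_point_if_continuous:
  fixes F :: "real \<Rightarrow> 'a::real_normed_vector \<Rightarrow> 'b::real_normed_vector"
  assumes "continuous_on U (\<lambda>(t, y). F t y)" "(t0, y0) \<in> U"
  obtains d where "0 < d"
    "\<And>t y. (t, y) \<in> U \<Longrightarrow> \<bar>t - t0\<bar> \<le> d \<Longrightarrow> norm (y - y0) \<le> d \<Longrightarrow> norm (F t y) \<le> norm (F t0 y0) + 1"
proof -
  have "\<forall>\<epsilon>>0. \<exists>\<delta>>0. \<forall>q\<in>U. dist q (t0, y0) < \<delta> \<longrightarrow>
      dist ((\<lambda>(t, y). F t y) q) ((\<lambda>(t, y). F t y) (t0, y0)) < \<epsilon>"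
    using assms unfolding continuous_on_iff by (rule bspec)
  then obtain e where e: "0 < e"
    "\<And>t y. (t, y) \<in> U \<Longrightarrow> dist (t, y) (t0, y0) < e \<Longrightarrow> dist (F t y) (F t0 y0) < 1"
    by (metis (lifting) case_prod_conv zero_less_one)
  show ?thesis
  proof (rule that)
    show "0 < e / 3"
      using e(1) by simp
    fix t y assume ty: "(t, y) \<in> U" "\<bar>t - t0\<bar> \<le> e / 3" "norm (y - y0) \<le> e / 3"
    have "dist (t, y) (t0, y0) \<le> \<bar>t - t0\<bar> + norm (y - y0)"
      using norm_Pair_le[of "t - t0" "y - y0"] by (simp add: dist_norm)
    then have "dist (F t y) (F t0 y0) < 1"
      using ty e by (intro e(2)) auto
    then show "norm (F t y) \<le> norm (F t0 y0) + 1"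
      using norm_triangle_sub[of "F t y" "F t0 y0"] by (simp add: dist_norm)
  qed
qed

lemma hyp_LC_local_bounds:
  fixes f :: "real \<Rightarrow> 'a::real_normed_vector \<Rightarrow> 'a"
  assumes LC: "hyp_LC T b f" and p: "(t0, y0) \<in> Omega T b"
  obtains d L M where "0 < d" "0 \<le> L"
    "\<And>t y. \<bar>t - t0\<bar> \<le> d \<Longrightarrow> norm (y - y0) \<le> d \<Longrightarrow> (t, y) \<in> Omega T b \<and> norm (f t y) \<le> M"
    "\<And>t y y'. \<bar>t - t0\<bar> \<le> d \<Longrightarrow> norm (y - y0) \<le> d \<Longrightarrow> norm (y' - y0) \<le> d \<Longrightarrow>
      norm (f t y - f t y') \<le> L * norm (y - y')"
proof -
  have cont: "continuous_on (Omega T b) (\<lambda>(t, y). f t y)"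
    and lip: "\<And>K. compact K \<Longrightarrow> K \<subseteq> Omega T b \<Longrightarrow>
      \<exists>C. \<forall>t y y'. (t, y) \<in> K \<and> (t, y') \<in> K \<longrightarrow> norm (f t y - f t y') \<le> C * norm (y - y')"
    using LC unfolding hyp_LC_def by blast+
  obtain d1 where d1: "0 < d1" "\<And>t y. \<bar>t - t0\<bar> \<le> d1 \<Longrightarrow> norm (y - y0) \<le> d1 \<Longrightarrow> (t, y) \<in> Omega T b"
    using open_contains_box[OF open_Omega p] by blast
  obtain d2 where d2: "0 < d2" "\<And>t y. (t, y) \<in> Omega T b \<Longrightarrow> \<bar>t - t0\<bar> \<le> d2 \<Longrightarrow> norm (y - y0) \<le> d2 \<Longrightarrow>
      norm (f t y) \<le> norm (f t0 y0) + 1"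
    using bounded_near_point_if_continuous[OF cont p] by blast
  obtain d3 L where d3: "0 < d3" "\<And>t y y'. \<bar>t - t0\<bar> \<le> d3 \<Longrightarrow> norm (y - y0) \<le> d3 \<Longrightarrow> norm (y' - y0) \<le> d3 \<Longrightarrow>
      norm (f t y - f t y') \<le> L * norm (y - y')"
    using lipschitz_near_point_if_lipschitz_on_compacts[OF open_Omega p lip] by blast
  define d where "d = min d1 (min d2 d3)"
  show ?thesis
  proof (rule that[of d "max L 0" "norm (f t0 y0) + 1"])
    show "0 < d" "0 \<le> max L 0"
      using d1 d2 d3 by (auto simp: d_def)
    fix t y y'
    assume "\<bar>t - t0\<bar> \<le> d" "norm (y - y0) \<le> d"
    then show "(t, y) \<in> Omega T b \<and> norm (f t y) \<le> norm (f t0 y0) + 1"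
      using d1(2) d2(2) by (simp add: d_def)
    assume "norm (y' - y0) \<le> d"
    then have "norm (f t y - f t y') \<le> L * norm (y - y')"
      using d3(2) \<open>\<bar>t - t0\<bar> \<le> d\<close> \<open>norm (y - y0) \<le> d\<close> by (simp add: d_def)
    also have "\<dots> \<le> max L 0 * norm (y - y')"
      by (intro mult_right_mono) auto
    finally show "norm (f t y - f t y') \<le> max L 0 * norm (y - y')" .
  qed
qed

section \<open>Local existence by the contraction principle\<close>

locale picard_box =
  fixes F :: "real \<Rightarrow> 'a::banach \<Rightarrow> 'a" and t1 h :: real and y1 :: 'a and r L M :: real
  assumes h_pos: "0 < h" and r_nonneg: "0 \<le> r" and L_nonneg: "0 \<le> L"
    and continuous: "continuous_on ({t1..t1 + h} \<times> cball y1 r) (\<lambda>(t, y). F t y)"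
    and bounded: "\<And>t y. t \<in> {t1..t1 + h} \<Longrightarrow> y \<in> cball y1 r \<Longrightarrow> norm (F t y) \<le> M"
    and lipschitz: "\<And>t y y'. t \<in> {t1..t1 + h} \<Longrightarrow> y \<in> cball y1 r \<Longrightarrow> y' \<in> cball y1 r \<Longrightarrow>
      norm (F t y - F t y') \<le> L * norm (y - y')"
    and small_step: "h * M \<le> r" "h * L < 1"
begin

text \<open>Clamping the upper integration bound to \<open>[t1, t1 + h]\<close> makes every Picard iterate a bounded
  continuous function on all of \<open>\<real>\<close>, so that the Banach fixed point theorem can be applied in
  the complete space \<open>real \<Rightarrow>\<^sub>C 'a\<close>.\<close>
definition clamp :: "real \<Rightarrow> real" where
  "clamp s = min (t1 + h) (max t1 s)"

definition curves :: "(real \<Rightarrow>\<^sub>C 'a) set" where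
  "curves = {u. \<forall>s. apply_bcontfun u s \<in> cball y1 r}"

definition picard :: "(real \<Rightarrow>\<^sub>C 'a) \<Rightarrow> real \<Rightarrow> 'a" where
  "picard u s = y1 + integral {t1..clamp s} (\<lambda>\<tau>. F \<tau> (apply_bcontfun u \<tau>))"

lemma clamp_in: "clamp s \<in> {t1..t1 + h}"
  using h_pos by (auto simp: clamp_def)

lemma clamp_id: "s \<in> {t1..t1 + h} \<Longrightarrow> clamp s = s"
  by (auto simp: clamp_def)

lemma continuous_on_clamp: "continuous_on UNIV clamp"
  unfolding clamp_def by (intro continuous_intros)

lemma M_nonneg: "0 \<le> M"
proof -
  have "norm (F t1 y1) \<le> M"
    using bounded h_pos r_nonneg by simp
  then show ?thesis
    by (meson norm_ge_zero order_trans)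
qed

lemma continuous_on_rhs:
  assumes "u \<in> curves"
  shows "continuous_on {t1..t1 + h} (\<lambda>\<tau>. F \<tau> (apply_bcontfun u \<tau>))"
proof -
  have "continuous_on {t1..t1 + h} (\<lambda>\<tau>. (\<lambda>(t, y). F t y) (\<tau>, apply_bcontfun u \<tau>))"
    by (rule continuous_on_compose2[OF continuous])
      (use assms in \<open>auto simp: curves_def intro: continuous_on_Pair continuous_on_id\<close>)
  then show ?thesis
    by simp
qed

lemma picard_in_cball:
  assumes "u \<in> curves"
  shows "picard u s \<in> cball y1 r"
proof -
  have "norm (picard u s - y1) \<le> M * (clamp s - t1)"
    unfolding picard_def using assms clamp_in[of s] bounded h_pos
    by (auto intro!: integral_bound continuous_on_subset[OF continuous_on_rhs[OF assms]] simp: curves_def)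
  also have "\<dots> \<le> M * h"
    using clamp_in[of s] M_nonneg by (intro mult_left_mono) auto
  finally show ?thesis
    using small_step(1) by (simp add: dist_norm norm_minus_commute mult.commute)
qed

lemma picard_bcontfun:
  assumes "u \<in> curves"
  shows "picard u \<in> bcontfun"
proof (rule bcontfun_normI)
  have "continuous_on {t1..t1 + h} (\<lambda>s. integral {t1..s} (\<lambda>\<tau>. F \<tau> (apply_bcontfun u \<tau>)))"
    by (intro indefinite_integral_continuous_1 integrable_continuous_interval continuous_on_rhs assms)
  then have "continuous_on UNIV (\<lambda>s. integral {t1..clamp s} (\<lambda>\<tau>. F \<tau> (apply_bcontfun u \<tau>)))"
    by (rule continuous_on_compose2[OF _ continuous_on_clamp]) (use clamp_in in auto)
  then show "continuous_on UNIV (picard u)"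
    unfolding picard_def by (intro continuous_intros)
  fix s
  show "norm (picard u s) \<le> norm y1 + r"
    using picard_in_cball[OF assms, of s] norm_triangle_sub[of "picard u s" y1]
    by (simp add: dist_norm norm_minus_commute)
qed

lemma complete_curves: "complete curves"
proof (rule complete_closed_subset[OF _ subset_UNIV complete_UNIV])
  have "closed {u :: real \<Rightarrow>\<^sub>C 'a. apply_bcontfun u s \<in> cball y1 r}" for s
  proof -
    have "continuous_on UNIV (\<lambda>u :: real \<Rightarrow>\<^sub>C 'a. apply_bcontfun u s)"
      by (rule lipschitz_on_continuous_on[where L=1]) (auto intro!: lipschitz_onI dist_bounded)
    from closed_vimage[OF closed_cball this] show ?thesis
      by (simp add: vimage_def)
  qed
  moreover have "curves = (\<Inter>s. {u. apply_bcontfun u s \<in> cball y1 r})"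
    by (auto simp: curves_def)
  ultimately show "closed curves"
    by auto
qed

lemma picard_contraction:
  assumes "u \<in> curves" "v \<in> curves"
  shows "dist (Bcontfun (picard u)) (Bcontfun (picard v)) \<le> (h * L) * dist u v"
proof (rule dist_bound)
  fix s
  let ?Fu = "\<lambda>\<tau>. F \<tau> (apply_bcontfun u \<tau>)" and ?Fv = "\<lambda>\<tau>. F \<tau> (apply_bcontfun v \<tau>)"
  have integrable: "?Fu integrable_on {t1..clamp s}" "?Fv integrable_on {t1..clamp s}"
    using clamp_in[of s] by (auto intro!: integrable_continuous_interval
        continuous_on_subset[OF continuous_on_rhs[OF assms(1)]] continuous_on_subset[OF continuous_on_rhs[OF assms(2)]])
  have "dist (picard u s) (picard v s) = norm (integral {t1..clamp s} (\<lambda>\<tau>. ?Fu \<tau> - ?Fv \<tau>))"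
    using integrable by (simp add: picard_def dist_norm integral_diff)
  also have "\<dots> \<le> (L * dist u v) * (clamp s - t1)"
  proof (rule integral_bound)
    show "t1 \<le> clamp s"
      using clamp_in[of s] by simp
    show "continuous_on {t1..clamp s} (\<lambda>\<tau>. ?Fu \<tau> - ?Fv \<tau>)"
      using clamp_in[of s] by (intro continuous_intros continuous_on_subset[OF continuous_on_rhs[OF assms(1)]]
          continuous_on_subset[OF continuous_on_rhs[OF assms(2)]]) auto
    fix \<tau> assume "\<tau> \<in> {t1..clamp s}"
    then have "norm (?Fu \<tau> - ?Fv \<tau>) \<le> L * norm (apply_bcontfun u \<tau> - apply_bcontfun v \<tau>)"
      using assms clamp_in[of s] by (intro lipschitz) (auto simp: curves_def)
    also have "\<dots> \<le> L * dist u v"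
      using L_nonneg dist_bounded[of u \<tau> v] by (intro mult_left_mono) (auto simp: dist_norm)
    finally show "norm (?Fu \<tau> - ?Fv \<tau>) \<le> L * dist u v" .
  qed
  also have "\<dots> \<le> (h * L) * dist u v"
    using clamp_in[of s] L_nonneg mult_left_mono[of "clamp s - t1" h "L * dist u v"] by (simp add: algebra_simps)
  finally show "dist (Bcontfun (picard u) s) (Bcontfun (picard v) s) \<le> (h * L) * dist u v"
    using picard_bcontfun[OF assms(1)] picard_bcontfun[OF assms(2)] by (simp add: Bcontfun_inverse)
qed

lemma picard_fixed_point:
  obtains u where "u \<in> curves" "\<And>s. apply_bcontfun u s = picard u s"
proof -
  have "const_bcontfun y1 \<in> curves"
    using r_nonneg by (simp add: curves_def)
  moreover have "Bcontfun (picard u) \<in> curves" if "u \<in> curves" for u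
    using that picard_in_cball picard_bcontfun by (simp add: curves_def Bcontfun_inverse)
  ultimately have "\<exists>!u\<in>curves. Bcontfun (picard u) = u"
    using h_pos L_nonneg picard_contraction
    by (intro Banach_fix[OF complete_curves _ _ small_step(2)]) auto
  then obtain u where "u \<in> curves" "Bcontfun (picard u) = u"
    by blast
  then show ?thesis
    using that picard_bcontfun by (metis Bcontfun_inverse)
qed

lemma local_solution:
  obtains u where "u t1 = y1"
    "\<And>t. t \<in> {t1..t1 + h} \<Longrightarrow> u t \<in> cball y1 r \<and> (u has_vector_derivative F t (u t)) (at t within {t1..t1 + h})"
proof -
  obtain u where u: "u \<in> curves" "\<And>s. apply_bcontfun u s = picard u s"
    using picard_fixed_point by blast
  have integral_equation: "apply_bcontfun u s = y1 + integral {t1..s} (\<lambda>\<tau>. F \<tau> (apply_bcontfun u \<tau>))"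
    if "s \<in> {t1..t1 + h}" for s
    using u(2)[of s] clamp_id[OF that] by (simp add: picard_def)
  show ?thesis
  proof (rule that)
    show "apply_bcontfun u t1 = y1"
      using integral_equation[of t1] h_pos by simp
    fix t assume t: "t \<in> {t1..t1 + h}"
    have "((\<lambda>s. y1 + integral {t1..s} (\<lambda>\<tau>. F \<tau> (apply_bcontfun u \<tau>))) has_vector_derivative
        F t (apply_bcontfun u t)) (at t within {t1..t1 + h})"
      using integral_has_vector_derivative[OF continuous_on_rhs[OF u(1)] t]
      by (auto intro!: derivative_eq_intros)
    from has_vector_derivative_transform[OF t integral_equation this]
    show "apply_bcontfun u t \<in> cball y1 r \<and>
        (apply_bcontfun u has_vector_derivative F t (apply_bcontfun u t)) (at t within {t1..t1 + h})"
      using u(1) by (simp add: curves_def)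
  qed
qed

end

lemma picard_step_size:
  fixes r L M :: real
  assumes "0 < r" "0 \<le> L" "0 \<le> M"
  obtains h where "0 < h" "h \<le> r" "h * M \<le> r" "h * L < 1"
proof -
  define h where "h = min r (min (r / (M + 1)) (1 / (L + 1)))"
  have "0 < h"
    using assms by (simp add: h_def)
  have h: "h \<le> r" "h \<le> r / (M + 1)" "h \<le> 1 / (L + 1)"
    unfolding h_def by (meson min.cobounded1 min.cobounded2 order_trans)+
  have "h * M \<le> r / (M + 1) * M"
    using h(2) assms(3) by (rule mult_right_mono)
  also have "\<dots> \<le> r"
    using assms by (simp add: field_simps)
  finally have "h * M \<le> r" .
  moreover have "h * L \<le> 1 / (L + 1) * L"
    using h(3) assms(2) by (rule mult_right_mono)
  moreover have "1 / (L + 1) * L < 1"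
    using assms by (simp add: field_simps)
  ultimately show ?thesis
    using that \<open>0 < h\<close> h(1) by fastforce
qed

lemma hyp_LC_local_solution:
  fixes f :: "real \<Rightarrow> 'a::banach \<Rightarrow> 'a"
  assumes LC: "hyp_LC T b f" and p: "(t0, y0) \<in> Omega T b"
  obtains e h where "0 < e" "0 < h"
    "\<And>t1 y1. \<bar>t1 - t0\<bar> \<le> e \<Longrightarrow> norm (y1 - y0) \<le> e \<Longrightarrow> \<exists>u. u t1 = y1 \<and>
      (\<forall>t\<in>{t1..t1 + h}. (t, u t) \<in> Omega T b \<and> (u has_vector_derivative f t (u t)) (at t within {t1..t1 + h}))"
proof -
  obtain d L M where d: "0 < d" and L: "0 \<le> L"
    and f_bounded: "\<And>t y. \<bar>t - t0\<bar> \<le> d \<Longrightarrow> norm (y - y0) \<le> d \<Longrightarrow> (t, y) \<in> Omega T b \<and> norm (f t y) \<le> M"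
    and f_lipschitz: "\<And>t y y'. \<bar>t - t0\<bar> \<le> d \<Longrightarrow> norm (y - y0) \<le> d \<Longrightarrow> norm (y' - y0) \<le> d \<Longrightarrow>
      norm (f t y - f t y') \<le> L * norm (y - y')"
    using hyp_LC_local_bounds[OF LC p] by blast
  have "norm (f t0 y0) \<le> M"
    using f_bounded[of t0 y0] d by simp
  then have M: "0 \<le> M"
    by (meson norm_ge_zero order_trans)
  obtain h where h: "0 < h" "h \<le> d / 2" "h * M \<le> d / 2" "h * L < 1"
    using picard_step_size[of "d / 2" L M] d L M by auto
  have "\<exists>u. u t1 = y1 \<and>
      (\<forall>t\<in>{t1..t1 + h}. (t, u t) \<in> Omega T b \<and> (u has_vector_derivative f t (u t)) (at t within {t1..t1 + h}))"
    if start: "\<bar>t1 - t0\<bar> \<le> d / 2" "norm (y1 - y0) \<le> d / 2" for t1 y1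
  proof -
    have near: "\<bar>t - t0\<bar> \<le> d \<and> norm (y - y0) \<le> d" if "t \<in> {t1..t1 + h}" "y \<in> cball y1 (d / 2)" for t y
    proof
      show "\<bar>t - t0\<bar> \<le> d"
        using start(1) that(1) h(2) unfolding abs_le_iff atLeastAtMost_iff by linarith
      show "norm (y - y0) \<le> d"
        using start(2) that(2) norm_triangle_le[of "y - y1" "y1 - y0" d] by (simp add: dist_norm norm_minus_commute)
    qed
    interpret picard_box f t1 h y1 "d / 2" L M
    proof
      show "continuous_on ({t1..t1 + h} \<times> cball y1 (d / 2)) (\<lambda>(t, y). f t y)"
      proof (rule continuous_on_subset)
        show "continuous_on (Omega T b) (\<lambda>(t, y). f t y)"
          using LC by (simp add: hyp_LC_def)
        show "{t1..t1 + h} \<times> cball y1 (d / 2) \<subseteq> Omega T b"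
          using near f_bounded by blast
      qed
      show "norm (f t y) \<le> M" if "t \<in> {t1..t1 + h}" "y \<in> cball y1 (d / 2)" for t y
        using near[OF that] f_bounded by blast
      show "norm (f t y - f t y') \<le> L * norm (y - y')"
        if "t \<in> {t1..t1 + h}" "y \<in> cball y1 (d / 2)" "y' \<in> cball y1 (d / 2)" for t y y'
        using near[OF that(1,2)] near[OF that(1,3)] f_lipschitz by blast
      show "0 < h" "0 \<le> d / 2" "0 \<le> L" "h * M \<le> d / 2" "h * L < 1"
        using h d L by simp_all
    qed
    obtain u where u: "u t1 = y1"
      "\<And>t. t \<in> {t1..t1 + h} \<Longrightarrow> u t \<in> cball y1 (d / 2) \<and> (u has_vector_derivative f t (u t)) (at t within {t1..t1 + h})"
      using local_solution by blast
    have "(t, u t) \<in> Omega T b" if "t \<in> {t1..t1 + h}" for t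
      using near[OF that] u(2)[OF that] f_bounded by blast
    with u show ?thesis
      by blast
  qed
  moreover have "0 < d / 2"
    using d by simp
  ultimately show ?thesis
    using that h(1) by blast
qed

section \<open>Comparison with the majorant equation\<close>

lemma le_add_lipschitz_excess:
  fixes G :: "real \<Rightarrow> real"
  assumes mono: "mono_on {0..<b} G" and lip: "L-lipschitz_on X G"
    and "n \<in> X" "z \<in> X" "0 \<le> n" "z < b"
  shows "G n \<le> G z + L * max 0 (n - z)"
proof (cases "n \<le> z")
  case True
  then have "G n \<le> G z"
    using assms by (intro mono_onD[OF mono]) auto
  moreover have "0 \<le> L"
    using lip lipschitz_on_nonneg by blast
  ultimately show ?thesis
    using True by (simp add: max_def)
next
  case False
  then have "G n - G z \<le> L * (n - z)"
    using lipschitz_onD[OF lip \<open>n \<in> X\<close> \<open>z \<in> X\<close>] by (simp add: dist_real_def)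
  then show ?thesis
    using False by simp
qed

lemma norm_minus_le_of_derivative_bounds:
  fixes y :: "real \<Rightarrow> 'a::banach" and z :: "real \<Rightarrow> real"
  assumes "s \<le> r"
    and y: "\<And>\<tau>. \<tau> \<in> {s..r} \<Longrightarrow> (y has_vector_derivative y' \<tau>) (at \<tau> within {s..r})"
    and z: "\<And>\<tau>. \<tau> \<in> {s..r} \<Longrightarrow> (z has_vector_derivative z' \<tau>) (at \<tau> within {s..r})"
    and bound: "\<And>\<tau>. \<tau> \<in> {s..r} \<Longrightarrow> norm (y' \<tau>) \<le> z' \<tau> + K"
  shows "norm (y r) - z r \<le> norm (y s) - z s + K * (r - s)"
proof -
  have y': "(y' has_integral (y r - y s)) {s..r}"
    by (rule fundamental_theorem_of_calculus[OF \<open>s \<le> r\<close> y])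
  have z': "((\<lambda>\<tau>. z' \<tau> + K) has_integral (z r - z s + (r - s) * K)) {s..r}"
    using has_integral_add[OF fundamental_theorem_of_calculus[OF \<open>s \<le> r\<close> z] has_integral_const_real[of K s r]]
      \<open>s \<le> r\<close> by simp
  have "norm (y r - y s) \<le> z r - z s + (r - s) * K"
    using integral_norm_bound_integral[OF has_integral_integrable[OF y'] has_integral_integrable[OF z'] bound]
    by (simp add: integral_unique[OF y'] integral_unique[OF z'])
  then show ?thesis
    using norm_triangle_sub[of "y r" "y s"] by (simp add: algebra_simps)
qed

text \<open>A first-crossing argument: between the last point \<open>s\<close> where \<open>w \<le> 0\<close> and a point \<open>r\<close> close
  enough to \<open>s\<close>, the growth bound with \<open>W\<close> the maximum of \<open>w\<close> on \<open>[s, r]\<close> gives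
  \<open>W \<le> L W (r - s) < W\<close>.\<close>
lemma nonpos_if_growth_bound:
  fixes w :: "real \<Rightarrow> real"
  assumes cont: "continuous_on {a..c} w" and start: "w a \<le> 0" and "a \<le> c" and L: "0 \<le> L"
    and growth: "\<And>s r W. a \<le> s \<Longrightarrow> s \<le> r \<Longrightarrow> r \<le> c \<Longrightarrow> 0 \<le> W \<Longrightarrow> (\<And>\<tau>. \<tau> \<in> {s..r} \<Longrightarrow> w \<tau> \<le> W) \<Longrightarrow>
      w r \<le> w s + L * W * (r - s)"
  shows "w c \<le> 0"
proof (rule ccontr)
  assume "\<not> w c \<le> 0"
  define A where "A = {a..c} \<inter> w -` {..0}"
  have "closed A"
    unfolding A_def by (rule continuous_closed_preimage[OF cont]) auto
  moreover have "a \<in> A"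
    using start \<open>a \<le> c\<close> by (simp add: A_def)
  moreover have "bdd_above A"
    unfolding A_def by (rule bdd_aboveI[of _ c]) auto
  ultimately have "Sup A \<in> A"
    using closed_contains_Sup by blast
  define s where "s = Sup A"
  have s: "a \<le> s" "s \<le> c" "w s \<le> 0"
    using \<open>Sup A \<in> A\<close> by (auto simp: s_def A_def)
  have positive: "0 < w r" if "s < r" "r \<le> c" for r
  proof (rule ccontr)
    assume "\<not> 0 < w r"
    then have "r \<in> A"
      using that s by (auto simp: A_def)
    then show False
      using cSup_upper[OF _ \<open>bdd_above A\<close>] that(1) by (force simp: s_def)
  qed
  have "s < c"
    using s \<open>\<not> w c \<le> 0\<close> by (cases "s = c") auto
  define r1 where "r1 = min c (s + 1 / (2 * (L + 1)))"
  have r1: "s < r1" "r1 \<le> c" "r1 - s \<le> 1 / (2 * (L + 1))"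
    using \<open>s < c\<close> L by (auto simp: r1_def)
  obtain r0 where r0: "r0 \<in> {s..r1}" "\<And>r. r \<in> {s..r1} \<Longrightarrow> w r \<le> w r0"
    using continuous_attains_sup[of "{s..r1}" w] continuous_on_subset[OF cont, of "{s..r1}"] s r1 by auto
  have "0 < w r0"
    using r0(2)[of r1] positive[of r1] r1 by auto
  have "w r0 \<le> w s + L * w r0 * (r0 - s)"
    using r0 r1 s \<open>0 < w r0\<close> by (intro growth) auto
  also have "\<dots> \<le> L * w r0 * (1 / (2 * (L + 1)))"
    using s(3) r0(1) r1(3) L \<open>0 < w r0\<close> mult_left_mono[of "r0 - s" "1 / (2 * (L + 1))" "L * w r0"] by auto
  also have "\<dots> < w r0"
    using L \<open>0 < w r0\<close> by (simp add: field_simps add_nonneg_pos)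
  finally show False
    by simp
qed

lemma hyp_MJ_norm_le:
  assumes MJ: "hyp_MJ T a b g f" and "(t, y) \<in> Omega T b" "0 \<le> t" "norm y \<le> R" "R < b"
  shows "norm (f t y) \<le> g t R"
proof -
  have "norm (f t y) \<le> g \<bar>t\<bar> (norm y)"
    using MJ assms(2) by (auto simp: hyp_MJ_def)
  also have "\<dots> \<le> g t R"
  proof -
    have "ereal t < T"
      using assms(2) by (simp add: Omega_def time_int_def)
    then have "mono_on {0..<b} (g t)"
      using MJ assms(3) by (simp add: hyp_MJ_def)
    then show ?thesis
      using assms(3-5) by (simp add: mono_onD order_trans[of 0 "norm y" R])
  qed
  finally show ?thesis .
qed

lemma hyp_MJ_continuous_on_time:
  assumes MJ: "hyp_MJ T a b g f" and "J \<subseteq> time_int T" "z \<in> {a<..<b}"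
  shows "continuous_on J (\<lambda>t. g t z)"
proof -
  have "continuous_on J (\<lambda>t. (\<lambda>(t, z). g t z) (t, z))"
    by (rule continuous_on_compose2[of "Omega_tilde T a b"])
      (use MJ assms(2,3) in \<open>auto intro: continuous_on_Pair continuous_on_id simp: hyp_MJ_def Omega_tilde_def\<close>)
  then show ?thesis
    by simp
qed

lemma hyp_MJ_lipschitz_on_compact:
  assumes MJ: "hyp_MJ T a b g f" and "compact X" "X \<subseteq> {a<..<b}" "X \<noteq> {}"
    and "compact J" "J \<subseteq> time_int T"
  obtains L where "0 \<le> L" "\<And>t. t \<in> J \<Longrightarrow> L-lipschitz_on X (g t)"
proof -
  have "local_lipschitz (time_int T) {a<..<b} g"
    using MJ by (simp add: hyp_MJ_def)
  then have "local_lipschitz J X g"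
    using local_lipschitz_subset assms(3,6) by blast
  moreover have "continuous_on J (\<lambda>t. g t z)" if "z \<in> X" for z
    using hyp_MJ_continuous_on_time[OF MJ assms(6)] that assms(3) by blast
  ultimately obtain L where L: "\<And>t. t \<in> J \<Longrightarrow> L-lipschitz_on X (g t)"
    using local_lipschitz_compact_implies_lipschitz assms(2,5) by metis
  show ?thesis
  proof (cases "J = {}")
    case True
    then show ?thesis
      using that[of 0] by simp
  next
    case False
    then show ?thesis
      using that L lipschitz_on_nonneg by blast
  qed
qed

lemma hyp_MJ_excess_bound:
  fixes f :: "real \<Rightarrow> 'a::real_normed_vector \<Rightarrow> 'a" and g :: "real \<Rightarrow> real \<Rightarrow> real"
  assumes MJ: "hyp_MJ T a b g f" and "a < 0" and "0 \<le> c"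
    and \<phi>: "continuous_on {0..c} \<phi>" "\<And>t. t \<in> {0..c} \<Longrightarrow> (t, \<phi> t) \<in> Omega T b"
    and \<psi>: "continuous_on {0..c} \<psi>" "\<And>t. t \<in> {0..c} \<Longrightarrow> (t, \<psi> t) \<in> Omega_tilde T a b"
  obtains L where "0 \<le> L"
    "\<And>t. t \<in> {0..c} \<Longrightarrow> norm (f t (\<phi> t)) \<le> g t (\<psi> t) + L * max 0 (norm (\<phi> t) - \<psi> t)"
proof -
  define X where "X = \<psi> ` {0..c} \<union> (\<lambda>t. norm (\<phi> t)) ` {0..c}"
  have "compact X"
    unfolding X_def by (intro compact_Un compact_continuous_image \<phi>(1) \<psi>(1) continuous_intros compact_Icc)
  moreover have "X \<subseteq> {a<..<b}"
  proof -
    have "\<psi> t \<in> {a<..<b}" "norm (\<phi> t) \<in> {a<..<b}" if "t \<in> {0..c}" for t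
      using \<phi>(2)[OF that] \<psi>(2)[OF that] less_le_trans[OF \<open>a < 0\<close> norm_ge_zero[of "\<phi> t"]]
      by (auto simp: Omega_def Omega_tilde_def)
    then show ?thesis
      unfolding X_def by blast
  qed
  moreover have "X \<noteq> {}" "{0..c} \<subseteq> time_int T"
    using \<open>0 \<le> c\<close> \<phi>(2) by (auto simp: X_def Omega_def)
  ultimately obtain L where L: "0 \<le> L" "\<And>t. t \<in> {0..c} \<Longrightarrow> L-lipschitz_on X (g t)"
    using hyp_MJ_lipschitz_on_compact[OF MJ] compact_Icc by metis
  have "norm (f t (\<phi> t)) \<le> g t (\<psi> t) + L * max 0 (norm (\<phi> t) - \<psi> t)" if t: "t \<in> {0..c}" for t
  proof -
    have "norm (f t (\<phi> t)) \<le> g t (norm (\<phi> t))"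
      using \<phi>(2)[OF t] t by (intro hyp_MJ_norm_le[OF MJ]) (auto simp: Omega_def)
    also have "\<dots> \<le> g t (\<psi> t) + L * max 0 (norm (\<phi> t) - \<psi> t)"
    proof (rule le_add_lipschitz_excess[OF _ L(2)[OF t]])
      show "mono_on {0..<b} (g t)"
        using MJ \<phi>(2)[OF t] t by (auto simp: hyp_MJ_def Omega_def time_int_def)
      show "norm (\<phi> t) \<in> X" "\<psi> t \<in> X" "\<psi> t < b"
        using t \<psi>(2)[OF t] by (auto simp: X_def Omega_tilde_def)
    qed simp
    finally show ?thesis .
  qed
  with L(1) show ?thesis
    using that by blast
qed

lemma norm_le_comparison_solution:
  fixes f :: "real \<Rightarrow> 'a::banach \<Rightarrow> 'a" and g :: "real \<Rightarrow> real \<Rightarrow> real"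
  assumes MJ: "hyp_MJ T a b g f" and "a < 0" and "0 \<le> c"
    and \<phi>: "\<And>t. t \<in> {0..c} \<Longrightarrow> (t, \<phi> t) \<in> Omega T b \<and> (\<phi> has_vector_derivative f t (\<phi> t)) (at t)"
    and \<psi>: "\<And>t. t \<in> {0..c} \<Longrightarrow> (t, \<psi> t) \<in> Omega_tilde T a b \<and> (\<psi> has_vector_derivative g t (\<psi> t)) (at t)"
    and start: "norm (\<phi> 0) \<le> \<psi> 0"
  shows "norm (\<phi> c) \<le> \<psi> c"
proof -
  have cont_\<phi>: "continuous_on {0..c} \<phi>" and cont_\<psi>: "continuous_on {0..c} \<psi>"
    using \<phi> \<psi> by (meson continuous_at_imp_continuous_on has_vector_derivative_continuous)+
  obtain L where L: "0 \<le> L"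
    and rhs_bound: "\<And>t. t \<in> {0..c} \<Longrightarrow> norm (f t (\<phi> t)) \<le> g t (\<psi> t) + L * max 0 (norm (\<phi> t) - \<psi> t)"
    using hyp_MJ_excess_bound[OF MJ \<open>a < 0\<close> \<open>0 \<le> c\<close> cont_\<phi> _ cont_\<psi>] \<phi> \<psi> by metis
  have growth: "norm (\<phi> r) - \<psi> r \<le> norm (\<phi> s) - \<psi> s + L * W * (r - s)"
    if "0 \<le> s" "s \<le> r" "r \<le> c" "0 \<le> W" and W: "\<And>\<tau>. \<tau> \<in> {s..r} \<Longrightarrow> norm (\<phi> \<tau>) - \<psi> \<tau> \<le> W" for s r W
  proof (rule norm_minus_le_of_derivative_bounds[OF \<open>s \<le> r\<close>])
    fix \<tau> assume "\<tau> \<in> {s..r}"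
    then have \<tau>: "\<tau> \<in> {0..c}"
      using that by auto
    show "(\<phi> has_vector_derivative f \<tau> (\<phi> \<tau>)) (at \<tau> within {s..r})"
      "(\<psi> has_vector_derivative g \<tau> (\<psi> \<tau>)) (at \<tau> within {s..r})"
      using \<phi>[OF \<tau>] \<psi>[OF \<tau>] has_vector_derivative_at_within by blast+
    have "L * max 0 (norm (\<phi> \<tau>) - \<psi> \<tau>) \<le> L * W"
      using W[OF \<open>\<tau> \<in> {s..r}\<close>] \<open>0 \<le> W\<close> L by (intro mult_left_mono) auto
    then show "norm (f \<tau> (\<phi> \<tau>)) \<le> g \<tau> (\<psi> \<tau>) + L * W"
      using rhs_bound[OF \<tau>] by simp
  qed
  have "continuous_on {0..c} (\<lambda>t. norm (\<phi> t) - \<psi> t)"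
    by (intro continuous_intros cont_\<phi> cont_\<psi>)
  moreover have "norm (\<phi> 0) - \<psi> 0 \<le> 0"
    using start by simp
  ultimately have "norm (\<phi> c) - \<psi> c \<le> 0"
    using \<open>0 \<le> c\<close> L growth by (rule nonpos_if_growth_bound)
  then show ?thesis
    by simp
qed

section \<open>Continuation of maximal solutions\<close>

lemma is_solution_at:
  assumes "is_solution F D y0 y \<alpha> \<beta>" "0 \<le> t" "ereal t < \<beta>"
  shows "(t, y t) \<in> D \<and> (y has_vector_derivative F t (y t)) (at t)"
proof -
  have "\<alpha> < ereal t"
    using assms by (auto simp: is_solution_def intro: less_le_trans)
  then show ?thesis
    using assms by (auto simp: is_solution_def eint_def)
qed

lemma is_solution_norm_le_comparison:
  fixes f :: "real \<Rightarrow> 'a::banach \<Rightarrow> 'a" and g :: "real \<Rightarrow> real \<Rightarrow> real"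
  assumes MJ: "hyp_MJ T a b g f" and "a < 0"
    and sol_\<phi>: "is_solution f (Omega T b) x \<phi> \<alpha> \<beta>"
    and sol_\<psi>: "is_solution g (Omega_tilde T a b) (norm x) \<psi> \<alpha>' \<beta>'"
    and t: "0 \<le> t" "ereal t < \<beta>" "ereal t < \<beta>'"
  shows "norm (\<phi> t) \<le> \<psi> t"
proof (rule norm_le_comparison_solution[OF MJ \<open>a < 0\<close> \<open>0 \<le> t\<close>])
  fix s assume "s \<in> {0..t}"
  then have "0 \<le> s" "ereal s < \<beta>" "ereal s < \<beta>'"
    using t le_less_trans[of "ereal s" "ereal t"] by auto
  then show "(s, \<phi> s) \<in> Omega T b \<and> (\<phi> has_vector_derivative f s (\<phi> s)) (at s)"
    "(s, \<psi> s) \<in> Omega_tilde T a b \<and> (\<psi> has_vector_derivative g s (\<psi> s)) (at s)"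
    using is_solution_at[OF sol_\<phi>] is_solution_at[OF sol_\<psi>] by blast+
next
  show "norm (\<phi> 0) \<le> \<psi> 0"
    using sol_\<phi> sol_\<psi> by (simp add: is_solution_def)
qed

lemma vector_derivative_bound_imp_lipschitz:
  fixes y :: "real \<Rightarrow> 'a::real_normed_vector"
  assumes "convex S" "\<And>t. t \<in> S \<Longrightarrow> (y has_vector_derivative y' t) (at t within S)"
    and "\<And>t. t \<in> S \<Longrightarrow> norm (y' t) \<le> M" "0 \<le> M"
  shows "M-lipschitz_on S y"
  using assms unfolding has_vector_derivative_def
  by (intro bounded_derivative_imp_lipschitz) (auto simp: onorm_scaleR_left onorm_id)

lemma has_limit_at_right_end_if_derivative_bounded:
  fixes y :: "real \<Rightarrow> 'a::banach"
  assumes "a < c" and "\<And>t. t \<in> {a..<c} \<Longrightarrow> (y has_vector_derivative y' t) (at t within {a..<c})"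
    and "\<And>t. t \<in> {a..<c} \<Longrightarrow> norm (y' t) \<le> M"
  obtains l where "(y \<longlongrightarrow> l) (at c within {a..<c})"
proof -
  have "norm (y' a) \<le> M"
    using assms(1,3) by simp
  then have "0 \<le> M"
    by (meson norm_ge_zero order_trans)
  with assms have "M-lipschitz_on {a..<c} y"
    by (intro vector_derivative_bound_imp_lipschitz) auto
  then have "uniformly_continuous_on {a..<c} y"
    by (rule lipschitz_on_uniformly_continuous)
  moreover have "c \<in> closure {a..<c}"
    using assms(1) by simp
  ultimately show ?thesis
    using uniformly_continuous_on_extension_at_closure that by blast
qed

lemma is_solution_glue:
  assumes sol: "is_solution F D y0 y \<alpha> \<beta>" and t1: "0 \<le> t1" "ereal t1 < \<beta>" and h: "0 < h"
    and u: "u t1 = y t1"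
      "\<And>t. t \<in> {t1..t1 + h} \<Longrightarrow> (t, u t) \<in> D \<and> (u has_vector_derivative F t (u t)) (at t within {t1..t1 + h})"
  shows "is_solution F D y0 (\<lambda>t. if t \<in> {..t1} then y t else u t) \<alpha> (ereal (t1 + h))"
  unfolding is_solution_def
proof (intro conjI ballI)
  have \<alpha>: "\<alpha> < 0" and y: "y 0 = y0"
    and y_sol: "\<And>t. t \<in> eint \<alpha> \<beta> \<Longrightarrow> (t, y t) \<in> D \<and> (y has_vector_derivative F t (y t)) (at t)"
    using sol by (auto simp: is_solution_def)
  show "\<alpha> < 0" "0 < ereal (t1 + h)" "(if 0 \<in> {..t1} then y 0 else u 0) = y0"
    using \<alpha> t1 h y by auto
  fix t assume "t \<in> eint \<alpha> (ereal (t1 + h))"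
  then have t: "\<alpha> < ereal t" "t < t1 + h"
    by (auto simp: eint_def)
  have in_y_domain: "s \<in> eint \<alpha> \<beta>" if "\<alpha> < ereal s" "s \<le> t1" for s
    using that le_less_trans[OF _ t1(2), of "ereal s"] by (simp add: eint_def)
  show "(t, if t \<in> {..t1} then y t else u t) \<in> D"
    using y_sol[OF in_y_domain[OF t(1)]] u(2)[of t] t(2) by auto
  have split: "{..<t1 + h} = {..t1} \<union> {t1<..<t1 + h}"
    using h by auto
  have "((\<lambda>t. if t \<in> {..t1} then y t else u t) has_vector_derivative
      (if t \<in> {..t1} then F t (y t) else F t (u t))) (at t within {..<t1 + h})"
  proof (rule has_vector_derivative_If_within_closures[OF _ split])
    show "t \<in> {..t1} \<union> {t1<..<t1 + h}"
      using t(2) by auto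
    assume "t \<in> {..t1} \<union> (closure {..t1} \<inter> closure {t1<..<t1 + h})"
    then have "t \<le> t1"
      using h by auto
    then show "(y has_vector_derivative F t (y t)) (at t within {..t1} \<union> (closure {..t1} \<inter> closure {t1<..<t1 + h}))"
      using y_sol[OF in_y_domain[OF t(1)]] has_vector_derivative_at_within by blast
  next
    assume "t \<in> {t1<..<t1 + h} \<union> (closure {..t1} \<inter> closure {t1<..<t1 + h})"
    moreover have "{t1<..<t1 + h} \<union> (closure {..t1} \<inter> closure {t1<..<t1 + h}) \<subseteq> {t1..t1 + h}"
      using h by auto
    ultimately show "(u has_vector_derivative F t (u t)) (at t within {t1<..<t1 + h} \<union> (closure {..t1} \<inter> closure {t1<..<t1 + h}))"
      using u(2) has_vector_derivative_within_subset by blast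
  next
    assume "t \<in> closure {..t1}" "t \<in> closure {t1<..<t1 + h}"
    then have "t = t1"
      using h by auto
    then show "y t = u t" "F t (y t) = F t (u t)"
      using u(1) by simp_all
  qed
  then show "((\<lambda>t. if t \<in> {..t1} then y t else u t) has_vector_derivative
      F t (if t \<in> {..t1} then y t else u t)) (at t)"
    using t(2) at_within_open[of t "{..<t1 + h}"] by (simp add: if_distrib)
qed

text \<open>Bounded velocity makes \<open>\<phi>\<close> converge at \<open>B\<close> to a point of \<open>\<Omega>(T, b)\<close>; a local solution
  started from a point of the trajectory close to that limit, whose lifetime is uniform near it,
  extends \<open>\<phi>\<close> past \<open>B\<close>.\<close>
lemma max_solution_continues:
  fixes f :: "real \<Rightarrow> 'a::banach \<Rightarrow> 'a"
  assumes LC: "hyp_LC T b f" and max: "is_max_solution f (Omega T b) x \<phi> \<alpha> \<beta>"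
    and B: "0 < B" "ereal B \<le> \<beta>" "B \<in> time_int T"
    and R: "R < b" "\<And>t. t \<in> {0..<B} \<Longrightarrow> norm (\<phi> t) \<le> R"
    and M: "\<And>t. t \<in> {0..<B} \<Longrightarrow> norm (f t (\<phi> t)) \<le> M"
  shows "ereal B < \<beta>"
proof (rule ccontr)
  assume "\<not> ereal B < \<beta>"
  with B(2) have \<beta>: "\<beta> = ereal B"
    by simp
  have sol: "is_solution f (Omega T b) x \<phi> \<alpha> \<beta>"
    using max by (simp add: is_max_solution_def)
  have \<phi>_at: "(t, \<phi> t) \<in> Omega T b \<and> (\<phi> has_vector_derivative f t (\<phi> t)) (at t)" if "t \<in> {0..<B}" for t
    using is_solution_at[OF sol] that \<beta> by simp
  have "(\<phi> has_vector_derivative f t (\<phi> t)) (at t within {0..<B})" if "t \<in> {0..<B}" for t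
    using \<phi>_at[OF that] has_vector_derivative_at_within by blast
  then obtain l where lim: "(\<phi> \<longlongrightarrow> l) (at B within {0..<B})"
    using has_limit_at_right_end_if_derivative_bounded[of 0 B \<phi> "\<lambda>t. f t (\<phi> t)" M] B(1) M by blast
  have "norm l \<le> R"
    using B(1) R(2) by (intro Lim_norm_ubound[OF _ lim]) (auto simp: trivial_limit_within eventually_at_filter)
  then have "(B, l) \<in> Omega T b"
    using B(3) R(1) by (simp add: Omega_def)
  then obtain e h where e: "0 < e" and h: "0 < h" and local_solution:
    "\<And>t1 y1. \<bar>t1 - B\<bar> \<le> e \<Longrightarrow> norm (y1 - l) \<le> e \<Longrightarrow> \<exists>u. u t1 = y1 \<and>
      (\<forall>t\<in>{t1..t1 + h}. (t, u t) \<in> Omega T b \<and> (u has_vector_derivative f t (u t)) (at t within {t1..t1 + h}))"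
    using hyp_LC_local_solution[OF LC] by metis
  obtain d where d: "0 < d" "\<And>t. t \<in> {0..<B} \<Longrightarrow> dist t B < d \<Longrightarrow> dist (\<phi> t) l < e"
    using tendstoD[OF lim e] by (auto simp: eventually_at)
  define t1 where "t1 = B - min d (min (min e h) B) / 2"
  have t1: "0 < t1" "t1 < B" "B - t1 < d" "B - t1 < h" "\<bar>t1 - B\<bar> \<le> e"
    using d e h B(1) by (auto simp: t1_def)
  moreover have "norm (\<phi> t1 - l) \<le> e"
    using d(2)[of t1] t1 by (simp add: dist_real_def dist_norm)
  ultimately obtain u where "u t1 = \<phi> t1"
    "\<And>t. t \<in> {t1..t1 + h} \<Longrightarrow> (t, u t) \<in> Omega T b \<and> (u has_vector_derivative f t (u t)) (at t within {t1..t1 + h})"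
    using local_solution by blast
  then have "is_solution f (Omega T b) x (\<lambda>t. if t \<in> {..t1} then \<phi> t else u t) \<alpha> (ereal (t1 + h))"
    using t1 \<beta> h by (intro is_solution_glue[OF sol]) auto
  then have "ereal (t1 + h) \<le> \<beta>"
    using max by (auto simp: is_max_solution_def)
  then show False
    using t1 \<beta> by simp
qed

lemma max_solution_continues_if_dominated:
  fixes f :: "real \<Rightarrow> 'a::banach \<Rightarrow> 'a" and g :: "real \<Rightarrow> real \<Rightarrow> real"
  assumes LC: "hyp_LC T b f" and MJ: "hyp_MJ T a b g f"
    and max: "is_max_solution f (Omega T b) x \<phi> \<alpha> \<beta>" and B: "0 < B" "ereal B \<le> \<beta>"
    and sol_\<psi>: "is_solution g (Omega_tilde T a b) z0 \<psi> \<alpha>' \<beta>'" "ereal B < \<beta>'"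
    and dominated: "\<And>t. t \<in> {0..<B} \<Longrightarrow> norm (\<phi> t) \<le> \<psi> t"
  shows "ereal B < \<beta>"
proof -
  have \<psi>: "(t, \<psi> t) \<in> Omega_tilde T a b \<and> (\<psi> has_vector_derivative g t (\<psi> t)) (at t)" if "t \<in> {0..B}" for t
    using is_solution_at[OF sol_\<psi>(1)] that sol_\<psi>(2) le_less_trans[of "ereal t" "ereal B" \<beta>'] by simp
  have sol: "is_solution f (Omega T b) x \<phi> \<alpha> \<beta>"
    using max by (simp add: is_max_solution_def)
  have \<phi>: "(t, \<phi> t) \<in> Omega T b" if "t \<in> {0..<B}" for t
  proof -
    have "ereal t < \<beta>"
      using that B(2) less_le_trans[of "ereal t" "ereal B" \<beta>] by simp
    then show ?thesis
      using is_solution_at[OF sol] that by simp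
  qed
  have "continuous_on {0..B} \<psi>"
    using \<psi> by (meson continuous_at_imp_continuous_on has_vector_derivative_continuous)
  then have "\<exists>t\<in>{0..B}. \<forall>s\<in>{0..B}. \<psi> s \<le> \<psi> t"
    by (rule continuous_attains_sup[OF compact_Icc, rotated]) (use B(1) in simp)
  then obtain t_max where t_max: "t_max \<in> {0..B}" "\<And>t. t \<in> {0..B} \<Longrightarrow> \<psi> t \<le> \<psi> t_max"
    by blast
  define R where "R = \<psi> t_max"
  have R: "a < R" "R < b"
    using \<psi>[OF t_max(1)] by (auto simp: R_def Omega_tilde_def)
  have time: "{0..B} \<subseteq> time_int T"
    using \<psi> by (auto simp: Omega_tilde_def)
  have "continuous_on {0..B} (\<lambda>t. g t R)"
    using hyp_MJ_continuous_on_time[OF MJ time] R(1,2) by simp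
  then have "\<exists>t\<in>{0..B}. \<forall>s\<in>{0..B}. g s R \<le> g t R"
    by (rule continuous_attains_sup[OF compact_Icc, rotated]) (use B(1) in simp)
  then obtain M where M: "\<And>t. t \<in> {0..B} \<Longrightarrow> g t R \<le> M"
    by blast
  have bounded: "norm (\<phi> t) \<le> R" if "t \<in> {0..<B}" for t
    using dominated[OF that] t_max(2)[of t] that by (simp add: R_def)
  have "norm (f t (\<phi> t)) \<le> M" if t: "t \<in> {0..<B}" for t
    using hyp_MJ_norm_le[OF MJ \<phi>[OF t] _ bounded[OF t] R(2)] M[of t] t by simp
  moreover have "B \<in> time_int T"
    using time B(1) by auto
  ultimately show ?thesis
    using max_solution_continues[OF LC max B] R(2) bounded by blast
qed

theorem mainTheorem7:
  fixes f :: "real \<Rightarrow> 'a::banach \<Rightarrow> 'a"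
    and g :: "real \<Rightarrow> real \<Rightarrow> real"
    and T :: ereal and a b :: real and x :: 'a
    and \<phi> :: "real \<Rightarrow> 'a" and \<psi> :: "real \<Rightarrow> real"
    and \<alpha> \<beta> \<alpha>' \<beta>' :: ereal
  assumes "0 < T"
    and "a < 0" and "0 < b"
    and "hyp_LC T b f"
    and "hyp_MJ T a b g f"
    and "norm x < b"
    and "is_max_solution f (Omega T b) x \<phi> \<alpha> \<beta>"
    and "is_max_solution g (Omega_tilde T a b) (norm x) \<psi> \<alpha>' \<beta>'"
  shows "\<beta>' \<le> \<beta> \<and> (\<forall>t. 0 \<le> t \<and> ereal t < \<beta>' \<longrightarrow> norm (\<phi> t) \<le> \<psi> t)"
proof -
  have sol_\<phi>: "is_solution f (Omega T b) x \<phi> \<alpha> \<beta>"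
    and sol_\<psi>: "is_solution g (Omega_tilde T a b) (norm x) \<psi> \<alpha>' \<beta>'"
    using assms(7,8) by (simp_all add: is_max_solution_def)
  note comparison = is_solution_norm_le_comparison[OF assms(5,2) sol_\<phi> sol_\<psi>]
  have "\<beta>' \<le> \<beta>"
  proof (rule ccontr)
    assume "\<not> \<beta>' \<le> \<beta>"
    moreover have "0 < \<beta>"
      using sol_\<phi> by (simp add: is_solution_def)
    ultimately obtain B where B: "\<beta> = ereal B" "0 < B" "ereal B < \<beta>'"
      by (cases \<beta>) auto
    have "ereal B < \<beta>"
      using B by (intro max_solution_continues_if_dominated[OF assms(4,5,7) B(2) _ sol_\<psi> B(3)])
        (auto intro!: comparison intro: less_trans[of _ "ereal B"])
    then show False
      using B(1) by simp
  qed
  then show ?thesis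
    using comparison by (auto intro: less_le_trans)
qed

end
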